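(* Let \[ Q(\tau)=\frac1{R_gT_\infty}\Big(\frac{4\pi}3-\frac{8(\gamma-1)}{\pi\gamma}\sum_{j\ge1}\frac{\tau}{j^2(\pi^2\bar\kappa j^2+\tau)}\Big)\Big(\rho_lR_*\tau^2+\frac{4\mu_l}{R_*}\tau-\frac{2\sigma}{R_*^2}\Big)+4\pi\frac{\rho_*}{R_*}, \] a meromorphic function of $\tau\in\mathbb C$. There exists $\phi\in(\pi/2,\pi)$ such that all roots of $Q$ lie in the sector $S_\phi=\{\tau\in\mathbb C:\phi\le|\arg\tau|\le\pi\}$.
   Context: Parameters: $\kappa>0$, $\gamma>1$, $c_v>0$, $R_g>0$ with $c_p=\gamma c_v=c_v+R_g$; $T_\infty>0$, $p_{\infty,*}>0$, $\sigma>0$, $\mu_l\ge0$, $\rho_l>0$; $\rho_*,R_*>0$ with $R_gT_\infty\rho_*=p_{\infty,*}+2\sigma/R_*$; $\bar\kappa=\kappa/(c_p\rho_*R_*^2)$. *)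

theory Defs
  imports "HOL-Analysis.Analysis"
begin

definition bubble_series :: "real \<Rightarrow> complex \<Rightarrow> complex" where
  "bubble_series kbar \<tau> =
     (\<Sum>j. \<tau> / (of_nat (Suc j) ^ 2 *
        (of_real (pi ^ 2 * kbar) * of_nat (Suc j) ^ 2 + \<tau>)))"

definition bubble_poles :: "real \<Rightarrow> complex set" where
  "bubble_poles kbar = {- of_real (pi ^ 2 * kbar * (real j) ^ 2) | j. j \<ge> 1}"

definition bubbleQ ::
  "real \<Rightarrow> real \<Rightarrow> real \<Rightarrow> real \<Rightarrow> real \<Rightarrow> real \<Rightarrow> real \<Rightarrow> real \<Rightarrow> real
     \<Rightarrow> complex \<Rightarrow> complex" where
  "bubbleQ Rg Tinf \<gamma> kbar \<rho>l \<mu>l \<sigma> Rs \<rho>s \<tau> =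
     of_real (1 / (Rg * Tinf)) *
       (of_real (4 * pi / 3) - of_real (8 * (\<gamma> - 1) / (pi * \<gamma>)) * bubble_series kbar \<tau>) *
       (of_real (\<rho>l * Rs) * \<tau> ^ 2 + of_real (4 * \<mu>l / Rs) * \<tau> - of_real (2 * \<sigma> / Rs ^ 2))
     + of_real (4 * pi * \<rho>s / Rs)"

end

theory Submission
  imports Defs
begin

text \<open>
  With \<open>a = \<pi>\<^sup>2 \<kappa>bar\<close> each summand of the series splits as
  \<open>1/j\<^sup>2 - a/(a j\<^sup>2 + \<tau>)\<close>, so a root of Q solves \<open>F(\<tau>) P(\<tau>) = -A\<close> with
  \<open>F = f + c U\<close>, \<open>U(\<tau>) = \<Sum> a/(a j\<^sup>2 + \<tau>)\<close>, constants f, c, A > 0 and P the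
  quadratic factor. Roots with \<open>|Im \<tau>| < -Re \<tau>\<close> are already in a sector, so only the
  region \<open>-Re \<tau> \<le> |Im \<tau>|\<close> needs work. There \<open>|U| \<le> \<pi>\<^sup>2/3\<close> and
  \<open>Re U + |Im U| \<ge> 0\<close>, so |F| lies between f/2 and a constant; this bounds |P| and
  hence \<open>|\<tau>|\<close>. Taking imaginary parts in \<open>P |F|\<^sup>2 = -A conj F\<close> and using
  \<open>Im U = -Im \<tau> \<Sum> a/|a j\<^sup>2 + \<tau>|\<^sup>2\<close> gives \<open>(2 \<rho> Re \<tau> + b) |F|\<^sup>2 < 0\<close> with a
  margin that is uniform because \<open>|\<tau>|\<close> is bounded, i.e. \<open>Re \<tau> \<le> -\<delta>\<close>. On the
  nonnegative real axis everything is real, and the equilibrium relation makes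
  \<open>F P > -A\<close> there.
\<close>

definition pole_term :: "real \<Rightarrow> complex \<Rightarrow> nat \<Rightarrow> complex" where
  "pole_term a \<tau> j = of_real a / (of_real a * of_nat (Suc j) ^ 2 + \<tau>)"

definition pole_sum :: "real \<Rightarrow> complex \<Rightarrow> complex" where
  "pole_sum a \<tau> = (\<Sum>j. pole_term a \<tau> j)"

definition pole_weight :: "real \<Rightarrow> complex \<Rightarrow> nat \<Rightarrow> real" where
  "pole_weight a \<tau> j = a / (cmod (of_real a * of_nat (Suc j) ^ 2 + \<tau>))\<^sup>2"

lemma inverse_squares_Suc_sums: "(\<lambda>j. 1 / real (Suc j) ^ 2) sums (pi\<^sup>2 / 6)"
  using inverse_squares_sums by (simp add: add.commute)

lemma norm_of_real_add_ge_half: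
  fixes \<tau> :: complex
  assumes "m \<ge> 0" and "- Re \<tau> \<le> \<bar>Im \<tau>\<bar>"
  shows "m / 2 \<le> cmod (of_real m + \<tau>)"
proof -
  have "m\<^sup>2 / 2 \<le> (m + Re \<tau>)\<^sup>2 + (Im \<tau>)\<^sup>2"
  proof (cases "Re \<tau> \<ge> 0")
    case True
    then have "m\<^sup>2 \<le> (m + Re \<tau>)\<^sup>2" using assms(1) by (intro power_mono) auto
    then show ?thesis using zero_le_power2[of m] zero_le_power2[of "Im \<tau>"] by linarith
  next
    case False
    then have "(Re \<tau>)\<^sup>2 \<le> (Im \<tau>)\<^sup>2" using assms(2) by (simp add: abs_le_square_iff[symmetric])
    moreover have "(m + Re \<tau>)\<^sup>2 + (Re \<tau>)\<^sup>2 = m\<^sup>2 / 2 + (m + 2 * Re \<tau>)\<^sup>2 / 2"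
      by (simp add: power2_eq_square field_simps)
    ultimately show ?thesis using zero_le_power2[of "m + 2 * Re \<tau>"] by linarith
  qed
  moreover have "(cmod (of_real m + \<tau>))\<^sup>2 = (m + Re \<tau>)\<^sup>2 + (Im \<tau>)\<^sup>2"
    by (simp add: cmod_power2)
  moreover have "(m / 2)\<^sup>2 = m\<^sup>2 / 4"
    by (simp add: power_divide)
  ultimately have "(m / 2)\<^sup>2 \<le> (cmod (of_real m + \<tau>))\<^sup>2"
    using zero_le_power2[of "m + Re \<tau>"] zero_le_power2[of "Im \<tau>"] by linarith
  then show ?thesis by (rule power2_le_imp_le) simp
qed

lemma pole_denominator_eq: "of_real a * of_nat (Suc j) ^ 2 + \<tau> = of_real (a * real (Suc j) ^ 2) + \<tau>"
  by simp

lemma norm_pole_term_le: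
  assumes "a > 0" and "- Re \<tau> \<le> \<bar>Im \<tau>\<bar>"
  shows "cmod (pole_term a \<tau> j) \<le> 2 / real (Suc j) ^ 2"
proof -
  let ?m = "a * real (Suc j) ^ 2"
  have m: "?m > 0" using assms(1) by simp
  have "?m / 2 \<le> cmod (of_real ?m + \<tau>)"
    using m assms(2) by (intro norm_of_real_add_ge_half) auto
  have "cmod (pole_term a \<tau> j) = a / cmod (of_real ?m + \<tau>)"
    unfolding pole_term_def pole_denominator_eq using assms(1) by (simp add: norm_divide)
  also have "\<dots> \<le> a / (?m / 2)"
    using \<open>?m / 2 \<le> cmod (of_real ?m + \<tau>)\<close> by (rule frac_le[rotated 3]) (use assms(1) m in auto)
  also have "\<dots> = 2 / real (Suc j) ^ 2" using assms(1) by simp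
  finally show ?thesis .
qed

lemma summable_norm_pole_term:
  assumes "a > 0" and "- Re \<tau> \<le> \<bar>Im \<tau>\<bar>"
  shows "summable (\<lambda>j. cmod (pole_term a \<tau> j))"
proof (rule summable_comparison_test')
  show "summable (\<lambda>j. 2 * (1 / real (Suc j) ^ 2))"
    using inverse_squares_Suc_sums by (intro summable_mult sums_summable)
  show "norm (cmod (pole_term a \<tau> j)) \<le> 2 * (1 / real (Suc j) ^ 2)" for j
    using norm_pole_term_le[OF assms] by simp
qed

lemma summable_pole_term:
  assumes "a > 0" and "- Re \<tau> \<le> \<bar>Im \<tau>\<bar>"
  shows "summable (pole_term a \<tau>)"
  using summable_norm_pole_term[OF assms] by (rule summable_norm_cancel)

lemma norm_pole_sum_le:
  assumes "a > 0" and "- Re \<tau> \<le> \<bar>Im \<tau>\<bar>"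
  shows "cmod (pole_sum a \<tau>) \<le> pi\<^sup>2 / 3"
proof -
  have "cmod (pole_sum a \<tau>) \<le> (\<Sum>j. 2 * (1 / real (Suc j) ^ 2))"
    unfolding pole_sum_def
    using norm_pole_term_le[OF assms] inverse_squares_Suc_sums
    by (intro norm_suminf_le summable_mult sums_summable) auto
  also have "\<dots> = pi\<^sup>2 / 3"
    using sums_mult[OF inverse_squares_Suc_sums, of 2] by (simp add: sums_iff)
  finally show ?thesis .
qed

lemma pole_term_eq_weight_cnj:
  "pole_term a \<tau> j = of_real (pole_weight a \<tau> j) * cnj (of_real a * of_nat (Suc j) ^ 2 + \<tau>)"
  unfolding pole_term_def pole_weight_def by (subst complex_div_cnj) simp

lemma summable_pole_weight:
  assumes "a > 0" and "- Re \<tau> \<le> \<bar>Im \<tau>\<bar>"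
  shows "summable (pole_weight a \<tau>)"
proof (rule summable_comparison_test')
  show "summable (\<lambda>j. 2 / a * cmod (pole_term a \<tau> j))"
    using summable_norm_pole_term[OF assms] by (rule summable_mult)
  fix j
  have weight: "pole_weight a \<tau> j = cmod (pole_term a \<tau> j) ^ 2 / a"
    using assms(1) by (simp add: pole_term_def pole_weight_def norm_divide power_divide power2_eq_square)
  have "2 / real (Suc j) ^ 2 \<le> 2"
    by (simp add: divide_le_eq)
  then have "cmod (pole_term a \<tau> j) \<le> 2"
    using norm_pole_term_le[OF assms, of j] by linarith
  then have "cmod (pole_term a \<tau> j) ^ 2 \<le> 2 * cmod (pole_term a \<tau> j)"
    by (simp add: power2_eq_square mult_right_mono)
  then show "norm (pole_weight a \<tau> j) \<le> 2 / a * cmod (pole_term a \<tau> j)"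
    using assms(1) by (simp add: weight divide_right_mono)
qed

lemma Re_Im_pole_term:
  "Re (pole_term a \<tau> j) = pole_weight a \<tau> j * (a * real (Suc j) ^ 2 + Re \<tau>)"
  "Im (pole_term a \<tau> j) = - Im \<tau> * pole_weight a \<tau> j"
  by (simp_all add: pole_term_eq_weight_cnj del: of_nat_Suc)

lemma Im_pole_sum:
  assumes "a > 0" and "- Re \<tau> \<le> \<bar>Im \<tau>\<bar>"
  shows "Im (pole_sum a \<tau>) = - Im \<tau> * (\<Sum>j. pole_weight a \<tau> j)"
  using Im_suminf[OF summable_pole_term[OF assms]]
    suminf_mult[OF summable_pole_weight[OF assms], of "- Im \<tau>"]
  by (simp add: pole_sum_def Re_Im_pole_term)

lemma Re_add_abs_Im_pole_sum_nonneg: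
  assumes "a > 0" and "- Re \<tau> \<le> \<bar>Im \<tau>\<bar>"
  shows "0 \<le> Re (pole_sum a \<tau>) + \<bar>Im (pole_sum a \<tau>)\<bar>"
proof -
  let ?W = "pole_weight a \<tau>"
  have W: "summable ?W" "\<And>j. 0 \<le> ?W j"
    using summable_pole_weight[OF assms] assms(1) by (auto simp: pole_weight_def)
  have Re: "summable (\<lambda>j. ?W j * (a * real (Suc j) ^ 2 + Re \<tau>))"
    "Re (pole_sum a \<tau>) = (\<Sum>j. ?W j * (a * real (Suc j) ^ 2 + Re \<tau>))"
    using summable_Re[OF summable_pole_term[OF assms]] Re_suminf[OF summable_pole_term[OF assms]]
    by (simp_all add: pole_sum_def Re_Im_pole_term)
  have "\<bar>Im (pole_sum a \<tau>)\<bar> = (\<Sum>j. ?W j * \<bar>Im \<tau>\<bar>)"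
    using Im_pole_sum[OF assms] suminf_nonneg[OF W] suminf_mult2[OF W(1), of "\<bar>Im \<tau>\<bar>"]
    by (simp add: abs_mult mult.commute)
  then have "Re (pole_sum a \<tau>) + \<bar>Im (pole_sum a \<tau>)\<bar>
      = (\<Sum>j. ?W j * (a * real (Suc j) ^ 2 + Re \<tau> + \<bar>Im \<tau>\<bar>))"
    using suminf_add[OF Re(1) summable_mult2[OF W(1)]] by (simp add: Re(2) algebra_simps)
  also have "\<dots> \<ge> 0"
  proof (rule suminf_nonneg)
    show "summable (\<lambda>j. ?W j * (a * real (Suc j) ^ 2 + Re \<tau> + \<bar>Im \<tau>\<bar>))"
      using summable_add[OF Re(1) summable_mult2[OF W(1), of "\<bar>Im \<tau>\<bar>"]]
      by (simp add: algebra_simps)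
    show "0 \<le> ?W j * (a * real (Suc j) ^ 2 + Re \<tau> + \<bar>Im \<tau>\<bar>)" for j
    proof (rule mult_nonneg_nonneg[OF W(2)])
      have "0 \<le> a * real (Suc j) ^ 2" using assms(1) by simp
      then show "0 \<le> a * real (Suc j) ^ 2 + Re \<tau> + \<bar>Im \<tau>\<bar>" using assms(2) by linarith
    qed
  qed
  finally show ?thesis .
qed

lemma pole_weight_suminf_ge:
  assumes "a > 0" and "- Re \<tau> \<le> \<bar>Im \<tau>\<bar>"
  shows "a / (cmod (of_real a + \<tau>))\<^sup>2 \<le> (\<Sum>j. pole_weight a \<tau> j)"
proof -
  have "sum (pole_weight a \<tau>) {0} \<le> (\<Sum>j. pole_weight a \<tau> j)"
    using summable_pole_weight[OF assms] assms(1)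
    by (intro sum_le_suminf) (auto simp: pole_weight_def)
  then show ?thesis by (simp add: pole_weight_def)
qed

lemma Re_pole_sum_le:
  assumes "a > 0" and "Re \<tau> \<ge> 0"
  shows "Re (pole_sum a \<tau>) \<le> pi\<^sup>2 / 6"
proof -
  have R: "- Re \<tau> \<le> \<bar>Im \<tau>\<bar>" using assms(2) by simp
  have "Re (pole_term a \<tau> j) \<le> 1 / real (Suc j) ^ 2" for j
  proof -
    let ?w = "of_real a * of_nat (Suc j) ^ 2 + \<tau>"
    have Re_w: "Re ?w = a * real (Suc j) ^ 2 + Re \<tau>" by (simp del: of_nat_Suc)
    have "a * real (Suc j) ^ 2 > 0" using assms(1) by simp
    then have pos: "Re ?w \<ge> a * real (Suc j) ^ 2" "Re ?w > 0" using Re_w assms(2) by linarith+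
    have "(Re ?w)\<^sup>2 \<le> (cmod ?w)\<^sup>2" by (simp add: cmod_power2)
    then have "Re (pole_term a \<tau> j) \<le> a * Re ?w / (Re ?w)\<^sup>2"
      unfolding Re_Im_pole_term Re_w[symmetric] pole_weight_def mult.commute[of _ "Re ?w"] times_divide_eq_right
      by (rule frac_le[rotated 3]) (use assms(1) pos in auto)
    also have "\<dots> = a / Re ?w" by (simp add: power2_eq_square)
    also have "\<dots> \<le> a / (a * real (Suc j) ^ 2)"
      using assms(1) pos by (intro divide_left_mono) auto
    finally show ?thesis using assms(1) by simp
  qed
  then have "Re (pole_sum a \<tau>) \<le> (\<Sum>j. 1 / real (Suc j) ^ 2)"
    unfolding pole_sum_def Re_suminf[OF summable_pole_term[OF assms(1) R]]
    using summable_Re[OF summable_pole_term[OF assms(1) R]] inverse_squares_Suc_sums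
    by (intro suminf_le) (auto simp: sums_iff)
  then show ?thesis using inverse_squares_Suc_sums by (simp add: sums_iff)
qed

lemma norm_ge_half_of_Re_add_abs_Im:
  fixes z :: complex
  assumes "r \<le> Re z + \<bar>Im z\<bar>"
  shows "r / 2 \<le> cmod z"
  using assms abs_Re_le_cmod[of z] abs_Im_le_cmod[of z] by linarith

lemma norm_pole_factor_bounds:
  assumes "a > 0" and "- Re \<tau> \<le> \<bar>Im \<tau>\<bar>" and "f > 0" and "c \<ge> 0"
  shows "f / 2 \<le> cmod (of_real f + of_real c * pole_sum a \<tau>)"
    and "cmod (of_real f + of_real c * pole_sum a \<tau>) \<le> f + c * pi\<^sup>2 / 3"
proof -
  let ?U = "pole_sum a \<tau>"
  have "f \<le> f + c * (Re ?U + \<bar>Im ?U\<bar>)"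
    using Re_add_abs_Im_pole_sum_nonneg[OF assms(1,2)] assms(4) by simp
  also have "\<dots> = Re (of_real f + of_real c * ?U) + \<bar>Im (of_real f + of_real c * ?U)\<bar>"
    using assms(4) by (simp add: abs_mult algebra_simps)
  finally show "f / 2 \<le> cmod (of_real f + of_real c * ?U)"
    by (rule norm_ge_half_of_Re_add_abs_Im)
  have "cmod (of_real f + of_real c * ?U) \<le> f + c * cmod ?U"
    using norm_triangle_ineq[of "of_real f" "of_real c * ?U"] assms(3,4) by (simp add: norm_mult)
  also have "\<dots> \<le> f + c * pi\<^sup>2 / 3"
    using mult_left_mono[OF norm_pole_sum_le[OF assms(1,2)] assms(4)] by simp
  finally show "cmod (of_real f + of_real c * ?U) \<le> f + c * pi\<^sup>2 / 3" .
qed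

lemma norm_le_of_quadratic_bound:
  fixes \<tau> :: complex
  assumes "\<rho> > 0" and "b \<ge> 0" and "d \<ge> 0"
    and "cmod (of_real \<rho> * \<tau>\<^sup>2 + of_real b * \<tau> - of_real d) \<le> C"
  shows "cmod \<tau> \<le> max 1 ((C + b + d) / \<rho>)"
proof (cases "cmod \<tau> \<le> 1")
  case False
  let ?t = "cmod \<tau>"
  have "0 \<le> C" using assms(4) norm_ge_zero order_trans by blast
  have "\<rho> * ?t\<^sup>2 = cmod ((of_real \<rho> * \<tau>\<^sup>2 + of_real b * \<tau> - of_real d) - of_real b * \<tau> + of_real d)"
    using assms(1) by (simp add: norm_mult norm_power)
  also have "\<dots> \<le> C + b * ?t + d"
    using assms norm_triangle_ineq4[of "of_real \<rho> * \<tau>\<^sup>2 + of_real b * \<tau> - of_real d" "of_real b * \<tau>"]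
      norm_triangle_ineq[of "of_real \<rho> * \<tau>\<^sup>2 + of_real b * \<tau> - of_real d - of_real b * \<tau>" "of_real d"]
    by (simp add: norm_mult)
  also have "\<dots> \<le> (C + b + d) * ?t"
    using False assms \<open>0 \<le> C\<close> mult_left_mono[of 1 ?t C] mult_left_mono[of 1 ?t d]
    by (simp add: algebra_simps)
  finally have "(\<rho> * ?t) * ?t \<le> (C + b + d) * ?t"
    by (simp add: power2_eq_square mult.assoc)
  then have "\<rho> * ?t \<le> C + b + d"
    by (rule mult_right_le_imp_le) (use False in auto)
  then have "?t \<le> (C + b + d) / \<rho>"
    using assms(1) by (simp add: field_simps)
  then show ?thesis by simp
qed simp

lemma Im_mult_cnj_balance:
  fixes F P :: complex
  assumes "F * P = - of_real A"
  shows "Im P * (cmod F)\<^sup>2 = A * Im F"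
proof -
  have "P * of_real ((cmod F)\<^sup>2) = (F * P) * cnj F"
    unfolding complex_norm_square by (simp add: algebra_simps)
  then have "P * of_real ((cmod F)\<^sup>2) = - of_real A * cnj F"
    unfolding assms .
  from arg_cong[OF this, of Im] show ?thesis by simp
qed

lemma Re_bound_of_Im_balance:
  fixes F \<tau> :: complex
  assumes "\<rho> > 0" and "b \<ge> 0" and "A > 0" and "c > 0" and "Im \<tau> \<noteq> 0"
    and root: "F * (of_real \<rho> * \<tau>\<^sup>2 + of_real b * \<tau> - of_real d) = - of_real A"
    and Im_F: "Im F = - c * Im \<tau> * W" and "0 \<le> w" and "w \<le> W" and "cmod F \<le> Fmax"
  shows "A * c * w \<le> 2 * \<rho> * Fmax\<^sup>2 * (- Re \<tau>)"
proof -
  let ?x = "Re \<tau>" and ?y = "Im \<tau>" and ?N = "(cmod F)\<^sup>2"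
  have Im_P: "Im (of_real \<rho> * \<tau>\<^sup>2 + of_real b * \<tau> - of_real d) = ?y * (2 * \<rho> * ?x + b)"
    by (simp add: power2_eq_square algebra_simps)
  have "?y * (2 * \<rho> * ?x + b) * ?N = A * (- c * ?y * W)"
    using Im_mult_cnj_balance[OF root] unfolding Im_P Im_F .
  then have "?y * ((2 * \<rho> * ?x + b) * ?N) = ?y * (- A * c * W)"
    by (simp add: algebra_simps)
  then have "(2 * \<rho> * ?x + b) * ?N = - A * c * W"
    by (rule mult_left_cancel[THEN iffD1, OF assms(5)])
  then have balance: "- 2 * \<rho> * ?x * ?N = b * ?N + A * c * W"
    by (simp add: algebra_simps)
  have "A * c * w \<le> A * c * W"
    using assms by (simp add: mult_left_mono)
  also have "\<dots> \<le> - 2 * \<rho> * ?x * ?N"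
    unfolding balance using assms(2) by simp
  finally have lower: "A * c * w \<le> - 2 * \<rho> * ?x * ?N" .
  have "F \<noteq> 0" using root assms(3) by auto
  then have N: "?N > 0" by simp
  have "?x \<le> 0"
  proof (rule ccontr)
    assume "\<not> ?x \<le> 0"
    then have "- 2 * \<rho> * ?x * ?N < 0" using assms(1) N by (simp add: mult_pos_pos)
    moreover have "0 \<le> A * c * w" using assms by simp
    ultimately show False using lower by linarith
  qed
  have "?N \<le> Fmax\<^sup>2" using assms(10) by (intro power_mono) auto
  then have "- 2 * \<rho> * ?x * ?N \<le> - 2 * \<rho> * ?x * Fmax\<^sup>2"
    using \<open>?x \<le> 0\<close> assms(1) by (intro mult_left_mono) (auto simp: mult_nonneg_nonpos)
  with lower show ?thesis by (simp add: algebra_simps)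
qed

lemma pole_factor_no_nonneg_real_root:
  assumes "a > 0" and "f > 0" and "c \<ge> 0" and "\<rho> \<ge> 0" and "b \<ge> 0" and "d \<ge> 0"
    and "(f + c * (pi\<^sup>2 / 6)) * d < A" and "Im \<tau> = 0" and "Re \<tau> \<ge> 0"
  shows "(of_real f + of_real c * pole_sum a \<tau>) * (of_real \<rho> * \<tau>\<^sup>2 + of_real b * \<tau> - of_real d)
    \<noteq> - of_real A"
proof
  assume root: "(of_real f + of_real c * pole_sum a \<tau>) * (of_real \<rho> * \<tau>\<^sup>2 + of_real b * \<tau> - of_real d)
    = - of_real A"
  let ?u = "Re (pole_sum a \<tau>)" and ?x = "Re \<tau>"
  have R: "- Re \<tau> \<le> \<bar>Im \<tau>\<bar>" using assms(9) by simp
  have Im_U: "Im (pole_sum a \<tau>) = 0" using Im_pole_sum[OF assms(1) R] assms(8) by simp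
  have u: "0 \<le> ?u" "?u \<le> pi\<^sup>2 / 6"
    using Re_add_abs_Im_pole_sum_nonneg[OF assms(1) R] Re_pole_sum_le[OF assms(1,9)] Im_U by simp_all
  from arg_cong[OF root, of Re] have "(f + c * ?u) * (\<rho> * ?x\<^sup>2 + b * ?x - d) = - A"
    using Im_U assms(8) by (simp add: power2_eq_square)
  moreover have "(f + c * ?u) * (- d) \<le> (f + c * ?u) * (\<rho> * ?x\<^sup>2 + b * ?x - d)"
    using assms u by (intro mult_left_mono) auto
  moreover have "f + c * ?u \<le> f + c * (pi\<^sup>2 / 6)"
    using mult_left_mono[OF u(2) assms(3)] by simp
  then have "(f + c * ?u) * d \<le> (f + c * (pi\<^sup>2 / 6)) * d"
    using assms(6) by (intro mult_right_mono) auto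
  ultimately show False using assms(7) by simp
qed

lemma pole_factor_roots_bounded:
  fixes a f c \<rho> b d A :: real
  assumes "a > 0" and "f > 0" and "c > 0" and "\<rho> > 0" and "b \<ge> 0" and "d \<ge> 0" and "A > 0"
    and "(f + c * (pi\<^sup>2 / 6)) * d < A"
  shows "\<exists>\<delta>>0. \<exists>M. \<forall>\<tau>. - Re \<tau> \<le> \<bar>Im \<tau>\<bar> \<longrightarrow>
    (of_real f + of_real c * pole_sum a \<tau>) * (of_real \<rho> * \<tau>\<^sup>2 + of_real b * \<tau> - of_real d)
      = - of_real A \<longrightarrow> \<delta> \<le> - Re \<tau> \<and> \<bar>Im \<tau>\<bar> \<le> M"
proof -
  define M where "M = max 1 ((2 * A / f + b + d) / \<rho>)"
  define Fmax where "Fmax = f + c * pi\<^sup>2 / 3"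
  define \<delta> where "\<delta> = A * c * (a / (a + M)\<^sup>2) / (2 * \<rho> * Fmax\<^sup>2)"
  have M: "M \<ge> 1" by (simp add: M_def)
  have "Fmax > 0" using assms by (simp add: Fmax_def add_pos_nonneg)
  then have "\<delta> > 0" using assms M by (simp add: \<delta>_def)
  moreover have "\<delta> \<le> - Re \<tau> \<and> \<bar>Im \<tau>\<bar> \<le> M"
    if R: "- Re \<tau> \<le> \<bar>Im \<tau>\<bar>"
      and root: "(of_real f + of_real c * pole_sum a \<tau>) * (of_real \<rho> * \<tau>\<^sup>2 + of_real b * \<tau> - of_real d)
        = - of_real A" for \<tau>
  proof -
    let ?F = "of_real f + of_real c * pole_sum a \<tau>"
      and ?P = "of_real \<rho> * \<tau>\<^sup>2 + of_real b * \<tau> - of_real d"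
      and ?W = "\<Sum>j. pole_weight a \<tau> j"
    have "Im \<tau> \<noteq> 0"
      using pole_factor_no_nonneg_real_root[of a f c \<rho> b d A \<tau>] assms R root by force
    have F: "f / 2 \<le> cmod ?F" "cmod ?F \<le> Fmax"
      using norm_pole_factor_bounds[OF assms(1) R assms(2)] assms(3) by (auto simp: Fmax_def)
    have "cmod ?F * cmod ?P = A"
      using arg_cong[OF root, of cmod] assms(7) by (simp add: norm_mult)
    then have "cmod ?P * (f / 2) \<le> A"
      using F(1) by (metis mult.commute mult_left_mono norm_ge_zero)
    then have "cmod ?P \<le> 2 * A / f" using assms(2) by (simp add: field_simps)
    then have "cmod \<tau> \<le> M"
      unfolding M_def using assms by (intro norm_le_of_quadratic_bound) auto
    have "of_real a + \<tau> \<noteq> 0" using \<open>Im \<tau> \<noteq> 0\<close> by (auto simp: complex_eq_iff)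
    moreover have "cmod (of_real a + \<tau>) \<le> a + M"
      using norm_triangle_ineq[of "of_real a" \<tau>] \<open>cmod \<tau> \<le> M\<close> assms(1) by simp
    ultimately have "a / (a + M)\<^sup>2 \<le> a / (cmod (of_real a + \<tau>))\<^sup>2"
      using assms(1) by (intro divide_left_mono power_mono mult_pos_pos) auto
    also have "\<dots> \<le> ?W" by (rule pole_weight_suminf_ge[OF assms(1) R])
    finally have W: "a / (a + M)\<^sup>2 \<le> ?W" .
    have "Im ?F = - c * Im \<tau> * ?W"
      using Im_pole_sum[OF assms(1) R] by simp
    then have "A * c * (a / (a + M)\<^sup>2) \<le> 2 * \<rho> * Fmax\<^sup>2 * (- Re \<tau>)"
      using assms \<open>Im \<tau> \<noteq> 0\<close> W F(2)
      by (intro Re_bound_of_Im_balance[OF _ _ _ _ _ root]) auto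
    moreover have D: "0 < 2 * \<rho> * Fmax\<^sup>2" using assms \<open>Fmax > 0\<close> by simp
    ultimately have "\<delta> \<le> - Re \<tau>"
      unfolding \<delta>_def pos_divide_le_eq[OF D] by (simp only: mult.commute)
    with \<open>cmod \<tau> \<le> M\<close> abs_Im_le_cmod[of \<tau>] show ?thesis by linarith
  qed
  ultimately show ?thesis by blast
qed

lemma sector_of_strip_bounds:
  assumes "\<delta> > 0" and "- Re \<tau> \<le> \<bar>Im \<tau>\<bar> \<Longrightarrow> \<delta> \<le> - Re \<tau> \<and> \<bar>Im \<tau>\<bar> \<le> M"
  shows "Re \<tau> < 0 \<and> \<bar>Im \<tau>\<bar> \<le> max 1 (M / \<delta>) * (- Re \<tau>)"
proof (cases "- Re \<tau> \<le> \<bar>Im \<tau>\<bar>")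
  case True
  then have "\<delta> \<le> - Re \<tau>" "\<bar>Im \<tau>\<bar> \<le> M" using assms(2) by auto
  moreover have "M \<le> max 1 (M / \<delta>) * \<delta>" using assms(1) by (simp add: max_def field_simps)
  moreover have "max 1 (M / \<delta>) * \<delta> \<le> max 1 (M / \<delta>) * (- Re \<tau>)"
    using \<open>\<delta> \<le> - Re \<tau>\<close> by (intro mult_left_mono) auto
  ultimately show ?thesis using assms(1) by linarith
next
  case False
  moreover have "- Re \<tau> \<le> max 1 (M / \<delta>) * (- Re \<tau>)"
    using False mult_right_mono[of 1 "max 1 (M / \<delta>)" "- Re \<tau>"] by simp
  ultimately show ?thesis by linarith
qed

lemma pi_minus_arctan_le_abs_Arg:
  assumes "K > 0" and "Re z < 0" and "\<bar>Im z\<bar> \<le> K * (- Re z)"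
  shows "pi - arctan K \<le> \<bar>Arg z\<bar>"
proof -
  have "z \<noteq> 0" using assms(2) by auto
  have Arg: "Arg z = Im (Ln z)" by (rule Arg_eq_Im_Ln[OF \<open>z \<noteq> 0\<close>])
  have "\<bar>Im z / Re z\<bar> = \<bar>Im z\<bar> / (- Re z)"
    using assms(2) by (simp add: abs_divide)
  also have "\<dots> \<le> K"
    using pos_divide_le_eq[of "- Re z" "\<bar>Im z\<bar>" K] assms(2,3) by (metis mult.commute neg_0_less_iff_less)
  finally have "\<bar>Im z / Re z\<bar> \<le> K" .
  then have "\<bar>arctan (Im z / Re z)\<bar> \<le> arctan K"
    by (metis abs_le_iff arctan_le_iff arctan_minus)
  moreover have "arctan K < pi / 2" by (rule arctan_ubound)
  moreover have "\<bar>Arg z\<bar> = pi - \<bar>arctan (Im z / Re z)\<bar>"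
  proof -
    have "\<bar>arctan (Im z / Re z)\<bar> < pi / 2" using arctan_bounded[of "Im z / Re z"] by auto
    moreover have "Im z / Re z \<le> 0 \<longleftrightarrow> Im z \<ge> 0" using assms(2) by (simp add: divide_le_0_iff)
    ultimately show ?thesis
      unfolding Arg Im_Ln_eq[OF \<open>z \<noteq> 0\<close>] using assms(2) arctan_le_zero_iff[of "Im z / Re z"]
      by (auto simp: abs_if) (use pi_gt_zero in linarith)+
  qed
  ultimately show ?thesis by linarith
qed

lemma bubble_series_eq_pole_sum:
  assumes "kbar > 0" and "- Re \<tau> \<le> \<bar>Im \<tau>\<bar>"
  shows "bubble_series kbar \<tau> = of_real (pi\<^sup>2 / 6) - pole_sum (pi\<^sup>2 * kbar) \<tau>"
proof -
  let ?a = "pi\<^sup>2 * kbar"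
  have a: "?a > 0" using assms(1) by simp
  have summand: "\<tau> / (of_nat (Suc j) ^ 2 * (of_real (pi ^ 2 * kbar) * of_nat (Suc j) ^ 2 + \<tau>))
      = of_real (1 / real (Suc j) ^ 2) - pole_term ?a \<tau> j" for j
  proof -
    have "?a * real (Suc j) ^ 2 / 2 \<le> cmod (of_real (?a * real (Suc j) ^ 2) + \<tau>)"
      using a assms(2) by (intro norm_of_real_add_ge_half) auto
    moreover have "?a * real (Suc j) ^ 2 / 2 > 0" using a by simp
    ultimately have "of_real ?a * of_nat (Suc j) ^ 2 + \<tau> \<noteq> 0"
      unfolding pole_denominator_eq by auto
    then show ?thesis unfolding pole_term_def by (simp add: field_simps del: of_nat_Suc)
  qed
  have "(\<lambda>j. of_real (1 / real (Suc j) ^ 2) - pole_term ?a \<tau> j)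
      sums (of_real (pi\<^sup>2 / 6) - pole_sum ?a \<tau>)"
    unfolding pole_sum_def
    by (intro sums_diff sums_of_real inverse_squares_Suc_sums summable_sums summable_pole_term a assms(2))
  then show ?thesis
    unfolding bubble_series_def summand by (rule sums_unique[symmetric])
qed

lemma bubble_coefficient_eq:
  assumes "\<gamma> \<noteq> 0"
  shows "4 * pi / (3 * \<gamma>) + 8 * (\<gamma> - 1) / (pi * \<gamma>) * (pi\<^sup>2 / 6) = 4 * pi / 3"
  using assms by (simp add: field_simps power2_eq_square)

lemma equilibrium_pressure_gt:
  assumes "Rs > 0" and "pinf > 0" and "\<sigma> > 0" and "Rg * Tinf * \<rho>s = pinf + 2 * \<sigma> / Rs"
  shows "4 * pi / 3 * (2 * \<sigma> / Rs\<^sup>2) < 4 * pi * \<rho>s / Rs * (Rg * Tinf)"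
proof -
  have "0 < 2 * \<sigma> / Rs\<^sup>2" using assms(1,3) by simp
  then have "4 * pi / 3 * (2 * \<sigma> / Rs\<^sup>2) < 4 * pi * (2 * \<sigma> / Rs\<^sup>2)"
    by (intro mult_strict_right_mono) auto
  also have "\<dots> = 4 * pi / Rs * (2 * \<sigma> / Rs)" by (simp add: power2_eq_square)
  also have "\<dots> < 4 * pi / Rs * (pinf + 2 * \<sigma> / Rs)"
    using assms(1,2) by (intro mult_strict_left_mono) auto
  also have "\<dots> = 4 * pi / Rs * (Rg * Tinf * \<rho>s)"
    by (simp only: assms(4))
  also have "\<dots> = 4 * pi * \<rho>s / Rs * (Rg * Tinf)"
    by (simp add: algebra_simps)
  finally show ?thesis .
qed

lemma bubbleQ_root_reduced:
  assumes "kbar > 0" and "\<gamma> \<noteq> 0" and "Rg * Tinf \<noteq> 0" and "- Re \<tau> \<le> \<bar>Im \<tau>\<bar>"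
    and "bubbleQ Rg Tinf \<gamma> kbar \<rho>l \<mu>l \<sigma> Rs \<rho>s \<tau> = 0"
  shows "(of_real (4 * pi / (3 * \<gamma>)) + of_real (8 * (\<gamma> - 1) / (pi * \<gamma>)) * pole_sum (pi\<^sup>2 * kbar) \<tau>)
      * (of_real (\<rho>l * Rs) * \<tau>\<^sup>2 + of_real (4 * \<mu>l / Rs) * \<tau> - of_real (2 * \<sigma> / Rs\<^sup>2))
    = - of_real (4 * pi * \<rho>s / Rs * (Rg * Tinf))"
    (is "?F * ?P = _")
proof -
  let ?c = "8 * (\<gamma> - 1) / (pi * \<gamma>)"
  have "of_real x - of_real c * (of_real y - U) = of_real (x - c * y) + of_real c * U"
    for x c y :: real and U :: complex
    by (simp add: algebra_simps)
  then have "of_real (4 * pi / 3) - of_real ?c * bubble_series kbar \<tau>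
      = of_real (4 * pi / 3 - ?c * (pi\<^sup>2 / 6)) + of_real ?c * pole_sum (pi\<^sup>2 * kbar) \<tau>"
    unfolding bubble_series_eq_pole_sum[OF assms(1,4)] .
  also have "4 * pi / 3 - ?c * (pi\<^sup>2 / 6) = 4 * pi / (3 * \<gamma>)"
    using bubble_coefficient_eq[OF assms(2)] by linarith
  finally have "of_real (1 / (Rg * Tinf)) * (?F * ?P) + of_real (4 * pi * \<rho>s / Rs) = 0"
    using assms(5) by (simp add: bubbleQ_def mult.assoc)
  moreover have "z = - of_real (B * x)" if "of_real (1 / x) * z + of_real B = 0" and "x \<noteq> 0"
    for z :: complex and x B :: real
    using that by (simp add: field_simps eq_neg_iff_add_eq_0)
  ultimately show ?thesis using assms(3) by blast
qed

lemma bubbleQ_roots_strip_bounded: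
  assumes "kbar > 0" and "\<gamma> > 1" and "Rg > 0" and "Tinf > 0" and "pinf > 0" and "\<sigma> > 0"
    and "\<mu>l \<ge> 0" and "\<rho>l > 0" and "\<rho>s > 0" and "Rs > 0"
    and "Rg * Tinf * \<rho>s = pinf + 2 * \<sigma> / Rs"
  shows "\<exists>\<delta>>0. \<exists>M. \<forall>\<tau>. - Re \<tau> \<le> \<bar>Im \<tau>\<bar> \<longrightarrow>
    bubbleQ Rg Tinf \<gamma> kbar \<rho>l \<mu>l \<sigma> Rs \<rho>s \<tau> = 0 \<longrightarrow> \<delta> \<le> - Re \<tau> \<and> \<bar>Im \<tau>\<bar> \<le> M"
proof -
  have "\<gamma> \<noteq> 0" and "Rg * Tinf \<noteq> 0" using assms by auto
  have "pi\<^sup>2 * kbar > 0" and "4 * pi / (3 * \<gamma>) > 0" and "8 * (\<gamma> - 1) / (pi * \<gamma>) > 0"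
    and "\<rho>l * Rs > 0" and "4 * \<mu>l / Rs \<ge> 0" and "2 * \<sigma> / Rs\<^sup>2 \<ge> 0"
    and "4 * pi * \<rho>s / Rs * (Rg * Tinf) > 0"
    using assms by auto
  moreover have "(4 * pi / (3 * \<gamma>) + 8 * (\<gamma> - 1) / (pi * \<gamma>) * (pi\<^sup>2 / 6)) * (2 * \<sigma> / Rs\<^sup>2)
      < 4 * pi * \<rho>s / Rs * (Rg * Tinf)"
    unfolding bubble_coefficient_eq[OF \<open>\<gamma> \<noteq> 0\<close>] using assms by (intro equilibrium_pressure_gt)
  ultimately obtain \<delta> M where "\<delta> > 0" and reduced: "\<forall>\<tau>. - Re \<tau> \<le> \<bar>Im \<tau>\<bar> \<longrightarrow>
      (of_real (4 * pi / (3 * \<gamma>)) + of_real (8 * (\<gamma> - 1) / (pi * \<gamma>)) * pole_sum (pi\<^sup>2 * kbar) \<tau>)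
      * (of_real (\<rho>l * Rs) * \<tau>\<^sup>2 + of_real (4 * \<mu>l / Rs) * \<tau> - of_real (2 * \<sigma> / Rs\<^sup>2))
      = - of_real (4 * pi * \<rho>s / Rs * (Rg * Tinf)) \<longrightarrow> \<delta> \<le> - Re \<tau> \<and> \<bar>Im \<tau>\<bar> \<le> M"
    by (metis pole_factor_roots_bounded)
  then show ?thesis
    using bubbleQ_root_reduced[OF assms(1) \<open>\<gamma> \<noteq> 0\<close> \<open>Rg * Tinf \<noteq> 0\<close>] by blast
qed

theorem lemmaB2:
  fixes \<kappa> \<gamma> cv Rg cp Tinf pinf \<sigma> \<mu>l \<rho>l \<rho>s Rs :: real
  assumes "\<kappa> > 0" and "\<gamma> > 1" and "cv > 0" and "Rg > 0"
    and "cp = \<gamma> * cv" and "cp = cv + Rg"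
    and "Tinf > 0" and "pinf > 0" and "\<sigma> > 0" and "\<mu>l \<ge> 0" and "\<rho>l > 0"
    and "\<rho>s > 0" and "Rs > 0"
    and "Rg * Tinf * \<rho>s = pinf + 2 * \<sigma> / Rs"
  shows "\<exists>\<phi>. pi / 2 < \<phi> \<and> \<phi> < pi \<and>
    (\<forall>\<tau>. \<tau> \<notin> bubble_poles (\<kappa> / (cp * \<rho>s * Rs ^ 2)) \<and>
          bubbleQ Rg Tinf \<gamma> (\<kappa> / (cp * \<rho>s * Rs ^ 2)) \<rho>l \<mu>l \<sigma> Rs \<rho>s \<tau> = 0
          \<longrightarrow> \<phi> \<le> \<bar>Arg \<tau>\<bar> \<and> \<bar>Arg \<tau>\<bar> \<le> pi)"
proof -
  define kbar where "kbar = \<kappa> / (cp * \<rho>s * Rs ^ 2)"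
  have "kbar > 0" using assms by (simp add: kbar_def)
  then obtain \<delta> M where "\<delta> > 0" and strip: "\<And>\<tau>. - Re \<tau> \<le> \<bar>Im \<tau>\<bar> \<Longrightarrow>
      bubbleQ Rg Tinf \<gamma> kbar \<rho>l \<mu>l \<sigma> Rs \<rho>s \<tau> = 0 \<Longrightarrow> \<delta> \<le> - Re \<tau> \<and> \<bar>Im \<tau>\<bar> \<le> M"
    using bubbleQ_roots_strip_bounded[of kbar \<gamma> Rg Tinf pinf \<sigma> \<mu>l \<rho>l \<rho>s Rs] assms by blast
  define K where "K = max 1 (M / \<delta>)"
  show ?thesis
  proof (intro exI[of _ "pi - arctan K"] conjI allI impI)
    show "pi / 2 < pi - arctan K" using arctan_ubound[of K] by simp
    show "pi - arctan K < pi" by (simp add: K_def)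
    fix \<tau>
    assume "\<tau> \<notin> bubble_poles (\<kappa> / (cp * \<rho>s * Rs ^ 2)) \<and>
      bubbleQ Rg Tinf \<gamma> (\<kappa> / (cp * \<rho>s * Rs ^ 2)) \<rho>l \<mu>l \<sigma> Rs \<rho>s \<tau> = 0"
    then have "bubbleQ Rg Tinf \<gamma> kbar \<rho>l \<mu>l \<sigma> Rs \<rho>s \<tau> = 0"
      by (simp add: kbar_def)
    then have "Re \<tau> < 0 \<and> \<bar>Im \<tau>\<bar> \<le> K * (- Re \<tau>)"
      unfolding K_def using strip by (intro sector_of_strip_bounds[OF \<open>\<delta> > 0\<close>])
    then show "pi - arctan K \<le> \<bar>Arg \<tau>\<bar>" "\<bar>Arg \<tau>\<bar> \<le> pi"
      using pi_minus_arctan_le_abs_Arg[of K \<tau>] Arg_bounded[of \<tau>] by (auto simp: K_def)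
  qed
qed

end
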